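(* There is no medial T2R semigroup, i.e. no T2R semigroup satisfies the identity $axyb=ayxb$ for all $a,b,x,y$.
   Context: A semigroup $S$ is a $\Delta$-semigroup if the lattice of all congruences of $S$ is a chain with respect to inclusion. A semigroup $N$ with zero $0$ is nil if every element has some power equal to $0$; non-trivial means having more than one element. A T2R semigroup is a $\Delta$-semigroup $S$ which is the disjoint union of a non-trivial nil ideal $S_0$ (with zero $0$, which is then the zero of $S$) and a subsemigroup $S_1=\{u,v\}$, $u\neq v$, which is a right zero semigroup ($xy=y$ for $x,y\in S_1$). *)

theory Defs
  imports Main
begin

definition semigroup_on :: "'a set \<Rightarrow> ('a \<Rightarrow> 'a \<Rightarrow> 'a) \<Rightarrow> bool" where
  "semigroup_on S f \<longleftrightarrow> (\<forall>x\<in>S. \<forall>y\<in>S. f x y \<in> S) \<and>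
     (\<forall>x\<in>S. \<forall>y\<in>S. \<forall>z\<in>S. f (f x y) z = f x (f y z))"

definition congruence_on :: "'a set \<Rightarrow> ('a \<Rightarrow> 'a \<Rightarrow> 'a) \<Rightarrow> 'a rel \<Rightarrow> bool" where
  "congruence_on S f \<rho> \<longleftrightarrow> equiv S \<rho> \<and>
     (\<forall>a\<in>S. \<forall>b\<in>S. \<forall>c\<in>S. (a, b) \<in> \<rho> \<longrightarrow> (f c a, f c b) \<in> \<rho> \<and> (f a c, f b c) \<in> \<rho>)"

definition Delta_semigroup :: "'a set \<Rightarrow> ('a \<Rightarrow> 'a \<Rightarrow> 'a) \<Rightarrow> bool" where
  "Delta_semigroup S f \<longleftrightarrow> semigroup_on S f \<and>
     (\<forall>\<rho> \<sigma>. congruence_on S f \<rho> \<and> congruence_on S f \<sigma> \<longrightarrow> \<rho> \<subseteq> \<sigma> \<or> \<sigma> \<subseteq> \<rho>)"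

(* n-th power, n >= 1: spow f x 0 = x, spow f x (Suc n) = x^(n+2) *)
primrec spow :: "('a \<Rightarrow> 'a \<Rightarrow> 'a) \<Rightarrow> 'a \<Rightarrow> nat \<Rightarrow> 'a" where
  "spow f x 0 = x"
| "spow f x (Suc n) = f (spow f x n) x"

definition nil_with_zero :: "'a set \<Rightarrow> ('a \<Rightarrow> 'a \<Rightarrow> 'a) \<Rightarrow> 'a \<Rightarrow> bool" where
  "nil_with_zero N f z \<longleftrightarrow> z \<in> N \<and> (\<forall>x\<in>N. f z x = z \<and> f x z = z) \<and>
     (\<forall>x\<in>N. \<exists>n. spow f x n = z)"

definition ideal_of :: "'a set \<Rightarrow> ('a \<Rightarrow> 'a \<Rightarrow> 'a) \<Rightarrow> 'a set \<Rightarrow> bool" where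
  "ideal_of S f I \<longleftrightarrow> I \<subseteq> S \<and> I \<noteq> {} \<and>
     (\<forall>s\<in>S. \<forall>x\<in>I. f s x \<in> I \<and> f x s \<in> I)"

definition T2R :: "'a set \<Rightarrow> ('a \<Rightarrow> 'a \<Rightarrow> 'a) \<Rightarrow> bool" where
  "T2R S f \<longleftrightarrow> Delta_semigroup S f \<and>
     (\<exists>S0 u v z. S = S0 \<union> {u, v} \<and> u \<notin> S0 \<and> v \<notin> S0 \<and> u \<noteq> v \<and>
        ideal_of S f S0 \<and> nil_with_zero S0 f z \<and> (\<exists>x\<in>S0. x \<noteq> z) \<and>
        (\<forall>x\<in>{u, v}. \<forall>y\<in>{u, v}. f x y = y))"

definition medial_on :: "'a set \<Rightarrow> ('a \<Rightarrow> 'a \<Rightarrow> 'a) \<Rightarrow> bool" where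
  "medial_on S f \<longleftrightarrow> (\<forall>a\<in>S. \<forall>b\<in>S. \<forall>x\<in>S. \<forall>y\<in>S.
     f (f (f a x) y) b = f (f (f a y) x) b)"

end

theory Submission
  imports Defs
begin

(* Let S = S0 \<union> {u,v} be a T2R semigroup with zero z and suppose S is medial.
   Mediality together with uu = u, uv = v, vu = u gives ub = vb for every b, i.e. u and v
   have the same left action.  We compare three congruences of S:
     - the Rees congruence \<rho> of the ideal S0 (collapse S0, nothing else),
     - the kernel \<sigma> of the left regular action (x ~ y iff xb = yb for all b),
     - the congruence \<delta> collapsing exactly u and v.
   Since (u,v) \<in> \<sigma> - \<rho>, the chain condition forces \<rho> \<subseteq> \<sigma>, so every c \<in> S0 acts on
   the left like the zero; hence cu = cv = z.  This makes \<delta> a congruence.  But \<rho> and \<delta>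
   are incomparable (S0 has a non-zero element, and u \<noteq> v), contradicting the chain
   condition. *)

lemma semigroup_onD:
  assumes "semigroup_on S f"
  shows semigroup_closed: "\<And>x y. x \<in> S \<Longrightarrow> y \<in> S \<Longrightarrow> f x y \<in> S"
    and semigroup_assoc: "\<And>x y w. x \<in> S \<Longrightarrow> y \<in> S \<Longrightarrow> w \<in> S \<Longrightarrow> f (f x y) w = f x (f y w)"
  using assms unfolding semigroup_on_def by blast+

lemma Delta_semigroup_chain:
  assumes "Delta_semigroup S f" "congruence_on S f \<rho>" "congruence_on S f \<sigma>"
  shows "\<rho> \<subseteq> \<sigma> \<or> \<sigma> \<subseteq> \<rho>"
  using assms unfolding Delta_semigroup_def by blast

definition rees_congruence :: "'a set \<Rightarrow> 'a set \<Rightarrow> 'a rel" where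
  "rees_congruence S I = (I \<times> I) \<union> Id_on S"

lemma rees_congruence_is_congruence:
  assumes "ideal_of S f I" "semigroup_on S f"
  shows "congruence_on S f (rees_congruence S I)"
  unfolding congruence_on_def rees_congruence_def
proof (intro conjI ballI impI)
  show "equiv S (I \<times> I \<union> Id_on S)"
    using assms(1) unfolding ideal_of_def equiv_def refl_on_def sym_def trans_def by blast
next
  fix a b c assume "a \<in> S" "b \<in> S" "c \<in> S" "(a, b) \<in> I \<times> I \<union> Id_on S"
  then show "(f c a, f c b) \<in> I \<times> I \<union> Id_on S" "(f a c, f b c) \<in> I \<times> I \<union> Id_on S"
    using assms unfolding ideal_of_def by (auto intro: semigroup_closed)
qed

definition left_action_kernel :: "'a set \<Rightarrow> ('a \<Rightarrow> 'a \<Rightarrow> 'a) \<Rightarrow> 'a rel" where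
  "left_action_kernel S f = {(x, y). x \<in> S \<and> y \<in> S \<and> (\<forall>b\<in>S. f x b = f y b)}"

lemma left_action_kernel_is_congruence:
  assumes "semigroup_on S f"
  shows "congruence_on S f (left_action_kernel S f)"
  unfolding congruence_on_def
proof (intro conjI ballI impI)
  show "equiv S (left_action_kernel S f)"
    unfolding left_action_kernel_def equiv_def refl_on_def sym_def trans_def by auto
next
  fix a b c assume "a \<in> S" "b \<in> S" "c \<in> S" "(a, b) \<in> left_action_kernel S f"
  then show "(f c a, f c b) \<in> left_action_kernel S f" "(f a c, f b c) \<in> left_action_kernel S f"
    using assms unfolding left_action_kernel_def
    by (auto simp: semigroup_assoc intro: semigroup_closed)
qed

definition pair_congruence :: "'a set \<Rightarrow> 'a \<Rightarrow> 'a \<Rightarrow> 'a rel" where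
  "pair_congruence S a b = Id_on S \<union> {a, b} \<times> {a, b}"

lemma pair_congruence_is_congruence:
  assumes "semigroup_on S f" "a \<in> S" "b \<in> S"
    and right: "\<And>c. c \<in> S \<Longrightarrow> f a c = f b c"
    and left: "\<And>c. c \<in> S \<Longrightarrow> f c a = f c b \<or> (f c a \<in> {a, b} \<and> f c b \<in> {a, b})"
  shows "congruence_on S f (pair_congruence S a b)"
  unfolding congruence_on_def pair_congruence_def
proof (intro conjI ballI impI)
  show "equiv S (Id_on S \<union> {a, b} \<times> {a, b})"
    using assms(2,3) unfolding equiv_def refl_on_def sym_def trans_def by blast
next
  fix x y c assume xy: "x \<in> S" "y \<in> S" "c \<in> S" "(x, y) \<in> Id_on S \<union> {a, b} \<times> {a, b}"
  show "(f c x, f c y) \<in> Id_on S \<union> {a, b} \<times> {a, b}"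
    using xy left[of c] assms(1) by (auto intro: semigroup_closed)
  show "(f x c, f y c) \<in> Id_on S \<union> {a, b} \<times> {a, b}"
    using xy right[of c] assms(1) by (auto intro: semigroup_closed)
qed

(* Key use of the chain condition: if two distinct elements a, b outside an ideal I have the
   same left action, then the Rees congruence of I lies in the left action kernel, so all
   elements of I have the same left action. *)
lemma Delta_ideal_uniform_left_action:
  assumes D: "Delta_semigroup S f" and ideal: "ideal_of S f I"
    and ab: "a \<in> S" "b \<in> S" "a \<noteq> b" "a \<notin> I"
    and same: "\<And>w. w \<in> S \<Longrightarrow> f a w = f b w"
    and cd: "c \<in> I" "d \<in> I" and "w \<in> S"
  shows "f c w = f d w"
proof -
  have sg: "semigroup_on S f" using D unfolding Delta_semigroup_def by blast
  have "(a, b) \<in> left_action_kernel S f - rees_congruence S I"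
    using ab same unfolding left_action_kernel_def rees_congruence_def by auto
  then have "rees_congruence S I \<subseteq> left_action_kernel S f"
    using Delta_semigroup_chain[OF D rees_congruence_is_congruence[OF ideal sg]
        left_action_kernel_is_congruence[OF sg]] by blast
  moreover have "(c, d) \<in> rees_congruence S I" using cd unfolding rees_congruence_def by blast
  ultimately show ?thesis using \<open>w \<in> S\<close> unfolding left_action_kernel_def by blast
qed

lemma ideal_zero_left_absorbs:
  assumes "semigroup_on S f" "ideal_of S f I" "z \<in> I"
    and zero: "\<And>x. x \<in> I \<Longrightarrow> f z x = z" and "w \<in> S"
  shows "f z w = z"
proof -
  have zS: "z \<in> S" using assms(2,3) unfolding ideal_of_def by blast
  have "f z w = f (f z z) w" using zero assms(3) by simp
  also have "\<dots> = f z (f z w)" using semigroup_assoc[OF assms(1) zS zS \<open>w \<in> S\<close>] .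
  also have "\<dots> = z" using zero assms(2,3,5) unfolding ideal_of_def by blast
  finally show ?thesis .
qed

lemma medial_right_zero_pair_same_left_action:
  assumes "medial_on S f" "u \<in> S" "v \<in> S" "b \<in> S"
    and "f u u = u" "f u v = v" "f v u = u"
  shows "f u b = f v b"
proof -
  have "f (f (f u u) v) b = f (f (f u v) u) b"
    using assms(1-4) unfolding medial_on_def by blast
  thus ?thesis using assms(5-7) by simp
qed

theorem mainTheorem11:
  fixes S :: "'a set" and f :: "'a \<Rightarrow> 'a \<Rightarrow> 'a"
  assumes "T2R S f"
  shows "\<not> medial_on S f"
proof
  assume med: "medial_on S f"
  from assms have D: "Delta_semigroup S f" and sg: "semigroup_on S f"
    unfolding T2R_def Delta_semigroup_def by blast+
  from assms obtain S0 u v z where S: "S = S0 \<union> {u, v}" and uv_out: "u \<notin> S0" "v \<notin> S0"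
    and "u \<noteq> v" and ideal: "ideal_of S f S0" and nil: "nil_with_zero S0 f z"
    and nontriv: "\<exists>x\<in>S0. x \<noteq> z" and rz: "\<forall>x\<in>{u, v}. \<forall>y\<in>{u, v}. f x y = y"
    unfolding T2R_def by blast
  have uv: "u \<in> S" "v \<in> S" using S by auto
  have z: "z \<in> S0" "\<And>x. x \<in> S0 \<Longrightarrow> f z x = z" using nil unfolding nil_with_zero_def by auto
  have same_left: "f u c = f v c" if "c \<in> S" for c
    using medial_right_zero_pair_same_left_action[OF med uv that] rz by simp
  let ?\<rho> = "rees_congruence S S0" and ?\<delta> = "pair_congruence S u v"
  have \<rho>: "congruence_on S f ?\<rho>" by (rule rees_congruence_is_congruence[OF ideal sg])
  have left_zero: "f c u = z \<and> f c v = z" if "c \<in> S0" for c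
    using Delta_ideal_uniform_left_action[OF D ideal uv \<open>u \<noteq> v\<close> uv_out(1) same_left that z(1)]
      ideal_zero_left_absorbs[OF sg ideal z] uv by simp
  have "f c u = f c v \<or> (f c u \<in> {u, v} \<and> f c v \<in> {u, v})" if "c \<in> S" for c
  proof (cases "c \<in> S0")
    case True
    then show ?thesis using left_zero by simp
  next
    case False
    then have "c \<in> {u, v}" using that S by blast
    then show ?thesis using rz by auto
  qed
  then have \<delta>: "congruence_on S f ?\<delta>"
    using pair_congruence_is_congruence[OF sg uv same_left] by blast
  obtain x where "x \<in> S0" "x \<noteq> z" using nontriv by blast
  then have "(x, z) \<in> ?\<rho> - ?\<delta>" "(u, v) \<in> ?\<delta> - ?\<rho>"
    using z(1) uv uv_out \<open>u \<noteq> v\<close> S unfolding rees_congruence_def pair_congruence_def by auto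
  then show False using Delta_semigroup_chain[OF D \<rho> \<delta>] by blast
qed

end
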